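(* Let $l$ be coprime to the conductor $N$. If $G_l$ is a diagonal matrix, then $G_l=\pm\mathbb{I}$.
   Context: Standing setting. $\mathcal{C}$ is a rational conformal field theory (RCFT) with finite set $\mathcal{I}$ of primary fields, vacuum $0\in\mathcal{I}$, central charge $c$ and conformal weights $\Delta_p$. Its genus-one characters afford a unitary representation $\rho$ of $\Gamma(1)=SL(2,\mathbb{Z})$; for $m\in\Gamma(1)$ write $M=\rho(m)$. $S=\rho\begin{pmatrix}0&-1\\1&0\end{pmatrix}$, $T=\rho\begin{pmatrix}1&1\\0&1\end{pmatrix}$. Known properties: $T$ is diagonal of finite order with $T_{pp}=\omega_p=\exp(2\pi i(\Delta_p-c/24))$; $S$ is symmetric; $S^2$ is the charge-conjugation permutation matrix; $S_{0p}>0$ for all $p$; Verlinde numbers are non-negative integers. $F$ is the field generated over $\mathbb{Q}$ by all entries of all $M$; the conductor $N$ is the smallest positive integer with $F\subseteq\mathbb{Q}(\zeta_N)$ and the order of $T$ dividing $N$. For $l$ coprime to $N$, $\sigma_l$ is the automorphism of $\mathbb{Q}(\zeta_N)$ with $\zeta_N\mapsto\zeta_N^l$, applied entrywise to matrices. Galois symmetry: for $l$ coprime to $N$, $\sigma_l(S)=SG_l=G_l^{-1}S$ where $(G_l)_{pq}=\varepsilon_l(q)\delta_{p,\pi_l q}$ for a permutation $\pi_l$ of $\mathcal{I}$ and signs $\varepsilon_l(q)\in\{\pm1\}$; $G_{lm}=G_lG_m$; $\sigma_l(T)=T^l$. *)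

theory Defs
  imports "HOL-Analysis.Analysis" "HOL-Computational_Algebra.Polynomial"
begin

definition SL2Z :: "(int^2^2) set" where
  "SL2Z = {m. det m = 1}"

definition mS :: "int^2^2" where
  "mS = (\<chi> i j. if i = 1 \<and> j = 2 then -1 else if i = 2 \<and> j = 1 then 1 else 0)"

definition mT :: "int^2^2" where
  "mT = (\<chi> i j. if i = 2 \<and> j = 1 then 0 else 1)"

primrec mpow :: "'a::comm_ring_1^'n^'n \<Rightarrow> nat \<Rightarrow> 'a^'n^'n" where
  "mpow A 0 = mat 1"
| "mpow A (Suc k) = A ** mpow A k"

definition ctrans :: "complex^'n^'m \<Rightarrow> complex^'m^'n" where
  "ctrans A = (\<chi> i j. cnj (A $ j $ i))"

definition perm_matrix :: "('i \<Rightarrow> 'i) \<Rightarrow> complex^'i^'i" where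
  "perm_matrix \<pi> = (\<chi> p q. if p = \<pi> q then 1 else 0)"

definition is_diagonal :: "'a::zero^'n^'n \<Rightarrow> bool" where
  "is_diagonal A \<longleftrightarrow> (\<forall>p q. p \<noteq> q \<longrightarrow> A $ p $ q = 0)"

definition zeta :: "nat \<Rightarrow> complex" where
  "zeta N = cis (2 * pi / real N)"

definition cyclo :: "nat \<Rightarrow> complex set" where
  "cyclo N = {x. \<exists>p :: rat poly. x = poly (map_poly of_rat p) (zeta N)}"

text \<open>The Galois automorphism sigma_l of Q(zeta_N), zeta_N \<mapsto> zeta_N^l
  (well defined for l coprime to N).\<close>
definition sigma :: "nat \<Rightarrow> nat \<Rightarrow> complex \<Rightarrow> complex" where
  "sigma N l x = (let p = (SOME p :: rat poly. x = poly (map_poly of_rat p) (zeta N))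
                  in poly (map_poly of_rat p) (zeta N ^ l))"

definition sigma_mat :: "nat \<Rightarrow> nat \<Rightarrow> complex^'n^'m \<Rightarrow> complex^'n^'m" where
  "sigma_mat N l A = (\<chi> i j. sigma N l (A $ i $ j))"

text \<open>Standing setting: genus-one characters of an RCFT with primaries 'i (finite),
  vacuum vac, central charge c, conformal weights Delta, representation rho of SL(2,Z).\<close>
definition rcft :: "'i::finite \<Rightarrow> real \<Rightarrow> ('i \<Rightarrow> real) \<Rightarrow> (int^2^2 \<Rightarrow> complex^'i^'i) \<Rightarrow> bool" where
  "rcft vac c Delta \<rho> \<longleftrightarrow>
     (\<forall>a\<in>SL2Z. \<forall>b\<in>SL2Z. \<rho> (a ** b) = \<rho> a ** \<rho> b)
   \<and> (\<forall>a\<in>SL2Z. \<rho> a ** ctrans (\<rho> a) = mat 1)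
   \<and> is_diagonal (\<rho> mT)
   \<and> (\<exists>n>0. mpow (\<rho> mT) n = mat 1)
   \<and> (\<forall>p. \<rho> mT $ p $ p = exp (2 * pi * \<i> * complex_of_real (Delta p - c / 24)))
   \<and> transpose (\<rho> mS) = \<rho> mS
   \<and> (\<exists>C. bij C \<and> \<rho> mS ** \<rho> mS = perm_matrix C)
   \<and> (\<forall>p. \<rho> mS $ vac $ p \<in> \<real> \<and> Re (\<rho> mS $ vac $ p) > 0)
   \<and> (\<forall>p q r. \<exists>n::nat. (\<Sum>s\<in>UNIV. \<rho> mS $ p $ s * \<rho> mS $ q $ s * cnj (\<rho> mS $ r $ s)
                                   / \<rho> mS $ vac $ s) = of_nat n)"

definition conductor :: "(int^2^2 \<Rightarrow> complex^'i::finite^'i) \<Rightarrow> nat" where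
  "conductor \<rho> = (LEAST N. N > 0 \<and> (\<forall>m\<in>SL2Z. \<forall>i j. \<rho> m $ i $ j \<in> cyclo N)
                              \<and> mpow (\<rho> mT) N = mat 1)"

definition signed_perm :: "complex^'i^'i \<Rightarrow> bool" where
  "signed_perm G \<longleftrightarrow> (\<exists>\<pi> \<epsilon>. bij \<pi> \<and> (\<forall>q. \<epsilon> q = 1 \<or> \<epsilon> q = -1)
        \<and> G = (\<chi> p q. if p = \<pi> q then \<epsilon> q else 0))"

definition galois_symmetry :: "(int^2^2 \<Rightarrow> complex^'i::finite^'i) \<Rightarrow> nat \<Rightarrow> (nat \<Rightarrow> complex^'i^'i) \<Rightarrow> bool" where
  "galois_symmetry \<rho> N G \<longleftrightarrow>
     (\<forall>l. coprime l N \<longrightarrow>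
        signed_perm (G l)
      \<and> sigma_mat N l (\<rho> mS) = \<rho> mS ** G l
      \<and> sigma_mat N l (\<rho> mS) = matrix_inv (G l) ** \<rho> mS
      \<and> sigma_mat N l (\<rho> mT) = mpow (\<rho> mT) l)
   \<and> (\<forall>l m. coprime l N \<longrightarrow> coprime m N \<longrightarrow> G (l * m) = G l ** G m)"

end

theory Submission
  imports Defs
begin

(* A diagonal signed permutation matrix is a diagonal matrix of signs, hence an involution.
   Galois symmetry writes sigma_l(S) both as S G and as G^-1 S = G S, so G commutes with S.
   Comparing the vacuum rows of S G and G S, whose entries S_0q are all nonzero, forces
   all diagonal signs of G to coincide with the one at the vacuum. *)

lemma matrix_mul_diagonal_right:
  fixes A B :: "'a::semiring_1^'n^'n"
  assumes "is_diagonal B"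
  shows "(A ** B) $ i $ j = A $ i $ j * B $ j $ j"
proof -
  have "(\<Sum>k\<in>UNIV. A $ i $ k * B $ k $ j) = A $ i $ j * B $ j $ j"
    by (subst sum.remove[of UNIV j])
       (use assms in \<open>auto simp: is_diagonal_def intro!: sum.neutral\<close>)
  then show ?thesis
    by (simp add: matrix_matrix_mult_def)
qed

lemma matrix_mul_diagonal_left:
  fixes A B :: "'a::semiring_1^'n^'n"
  assumes "is_diagonal B"
  shows "(B ** A) $ i $ j = B $ i $ i * A $ i $ j"
proof -
  have "(\<Sum>k\<in>UNIV. B $ i $ k * A $ k $ j) = B $ i $ i * A $ i $ j"
    by (subst sum.remove[of UNIV i])
       (use assms in \<open>auto simp: is_diagonal_def intro!: sum.neutral\<close>)
  then show ?thesis
    by (simp add: matrix_matrix_mult_def)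
qed

lemma matrix_inv_unique:
  fixes A B :: "'a::semiring_1^'n^'n"
  assumes "A ** B = mat 1" and "B ** A = mat 1"
  shows "matrix_inv A = B"
proof -
  let ?A' = "matrix_inv A"
  have "A ** ?A' = mat 1 \<and> ?A' ** A = mat 1"
    unfolding matrix_inv_def by (rule someI[of _ B]) (use assms in blast)
  then have "?A' = ?A' ** (A ** B)" and "?A' ** A = mat 1"
    using assms by simp_all
  then show ?thesis
    by (simp add: matrix_mul_assoc)
qed

lemma signed_perm_diagonal_entries:
  assumes "signed_perm G" and "is_diagonal G"
  shows "G $ q $ q = 1 \<or> G $ q $ q = -1"
proof -
  from assms(1) obtain \<pi> \<epsilon> where sign: "\<And>q. \<epsilon> q = 1 \<or> \<epsilon> q = -1"
    and G: "G = (\<chi> p q. if p = \<pi> q then \<epsilon> q else 0)"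
    unfolding signed_perm_def by blast
  have "G $ \<pi> q $ q = \<epsilon> q"
    by (simp add: G)
  moreover have "\<epsilon> q \<noteq> 0"
    using sign[of q] by auto
  ultimately have "\<pi> q = q"
    using assms(2) unfolding is_diagonal_def by metis
  then show ?thesis
    using sign[of q] by (simp add: G)
qed

lemma diagonal_signs_mult_self:
  fixes D :: "'a::ring_1^'n^'n"
  assumes "is_diagonal D" and "\<And>q. D $ q $ q = 1 \<or> D $ q $ q = -1"
  shows "D ** D = mat 1"
proof -
  have "D $ q $ q * D $ q $ q = 1" for q
    using assms(2)[of q] by auto
  then show ?thesis
    using assms(1)
    by (auto simp: vec_eq_iff mat_def matrix_mul_diagonal_right is_diagonal_def)
qed

lemma diagonal_commuting_row_nonzero_scalar:
  fixes D M :: "'a::idom^'n^'n"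
  assumes "is_diagonal D" and "M ** D = D ** M" and "\<And>q. M $ r $ q \<noteq> 0"
  shows "D = mat (D $ r $ r)"
proof -
  have "M $ r $ q * D $ q $ q = M $ r $ q * D $ r $ r" for q
    using arg_cong[OF assms(2), of "\<lambda>A. A $ r $ q"]
    by (simp add: matrix_mul_diagonal_right matrix_mul_diagonal_left assms(1) mult.commute)
  then have "D $ q $ q = D $ r $ r" for q
    using assms(3) by simp
  then show ?thesis
    using assms(1) by (auto simp: vec_eq_iff mat_def is_diagonal_def)
qed

theorem mainTheorem10:
  fixes vac :: "'i::finite" and c :: real and Delta :: "'i \<Rightarrow> real"
    and \<rho> :: "int^2^2 \<Rightarrow> complex^'i^'i" and N l :: nat and G :: "nat \<Rightarrow> complex^'i^'i"
  assumes "rcft vac c Delta \<rho>"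
    and "N = conductor \<rho>"
    and "galois_symmetry \<rho> N G"
    and "coprime l N"
    and "is_diagonal (G l)"
  shows "G l = mat 1 \<or> G l = - mat 1"
proof -
  from assms(3,4) have perm: "signed_perm (G l)"
    and S_G: "sigma_mat N l (\<rho> mS) = \<rho> mS ** G l"
    and G_S: "sigma_mat N l (\<rho> mS) = matrix_inv (G l) ** \<rho> mS"
    unfolding galois_symmetry_def by auto
  have signs: "G l $ q $ q = 1 \<or> G l $ q $ q = -1" for q
    by (rule signed_perm_diagonal_entries[OF perm assms(5)])
  then have "matrix_inv (G l) = G l"
    using matrix_inv_unique diagonal_signs_mult_self[OF assms(5)] by metis
  then have commute: "\<rho> mS ** G l = G l ** \<rho> mS"
    using S_G G_S by simp
  have "\<rho> mS $ vac $ q \<noteq> 0" for q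
    using assms(1) unfolding rcft_def by (metis less_irrefl zero_complex.sel(1))
  then have scalar: "G l = mat (G l $ vac $ vac)"
    by (rule diagonal_commuting_row_nonzero_scalar[OF assms(5) commute])
  have "mat (-1) = - (mat 1 :: complex^'i^'i)"
    by (simp add: vec_eq_iff mat_def)
  then show ?thesis
    using scalar signs[of vac] by metis
qed

end
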